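(* Fix integers $s,t\geq 2$ and a subset $W=\{w_1<w_2<\cdots<w_k\}$ of $\{s+1,\ldots,st\}$. Let $\Omega_{s,t}(W)$ be the collection of all sets of integers $I=\{i_1<i_2<\cdots<i_k\}$ satisfying $w_\ell-s+\ell\leq i_\ell\leq w_\ell-1$ for all $\ell\in[k]$, and let $\Lambda_{s,t}(W)$ be the set of all $321$-avoiding linear extensions of $K_{s,t}^\alpha$ whose right-to-left minima are precisely the elements of $[st]\setminus W$. For $I\in\Omega_{s,t}(W)$ let $\mu_W(I)=\mu_1\cdots\mu_{st}$ be the permutation of $[st]$ with $\mu_{i_\ell}=w_\ell$ for all $\ell\in[k]$ and with the elements of $[st]\setminus W$ placed in increasing order in the remaining positions. Then $I\mapsto\mu_W(I)$ is a well-defined injection $\Omega_{s,t}(W)\to\Lambda_{s,t}(W)$. If $t=2$, this map is a bijection.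
   Context: $K^\alpha_{s,t}$ is the poset on $[st]$ whose order is generated by the covering relations $i\lessdot i+1$ for $1\le i\le s-1$ and $i\lessdot i+s$ for $1\le i\le st-s$ (the comb $K_{s,t}$ with $\alpha$-labeling $e_{i,j}\mapsto (j-1)s+i$). A linear extension is a permutation of $[st]$ in which $x$ precedes $y$ whenever $x<y$ in the poset. An entry $\pi_i$ is a right-to-left minimum if $\pi_i<\pi_j$ for all $j>i$. *)

theory Defs
  imports Main
begin

text \<open>Permutations of [n] are represented as lists of naturals (positions are
0-indexed in the list; paper position p corresponds to list index p-1).\<close>

definition is_perm :: "nat \<Rightarrow> nat list \<Rightarrow> bool" where
  "is_perm n \<pi> \<longleftrightarrow> distinct \<pi> \<and> set \<pi> = {1..n}"

definition comb_cover :: "nat \<Rightarrow> nat \<Rightarrow> nat \<Rightarrow> nat \<Rightarrow> bool" where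
  "comb_cover s t x y \<longleftrightarrow>
     (1 \<le> x \<and> x \<le> s - 1 \<and> y = x + 1) \<or> (1 \<le> x \<and> x + s \<le> s * t \<and> y = x + s)"

definition comb_less :: "nat \<Rightarrow> nat \<Rightarrow> nat \<Rightarrow> nat \<Rightarrow> bool" where
  "comb_less s t = (comb_cover s t)\<^sup>+\<^sup>+"

definition precedes :: "nat list \<Rightarrow> nat \<Rightarrow> nat \<Rightarrow> bool" where
  "precedes \<pi> x y \<longleftrightarrow> (\<exists>i j. i < j \<and> j < length \<pi> \<and> \<pi> ! i = x \<and> \<pi> ! j = y)"

definition linear_extension :: "nat \<Rightarrow> nat \<Rightarrow> nat list \<Rightarrow> bool" where
  "linear_extension s t \<pi> \<longleftrightarrow> is_perm (s * t) \<pi> \<and>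
     (\<forall>x y. comb_less s t x y \<longrightarrow> precedes \<pi> x y)"

definition avoids_321 :: "nat list \<Rightarrow> bool" where
  "avoids_321 \<pi> \<longleftrightarrow>
     \<not> (\<exists>i j k. i < j \<and> j < k \<and> k < length \<pi> \<and> \<pi> ! i > \<pi> ! j \<and> \<pi> ! j > \<pi> ! k)"

definition rl_minima :: "nat list \<Rightarrow> nat set" where
  "rl_minima \<pi> = {\<pi> ! i | i. i < length \<pi> \<and> (\<forall>j. i < j \<and> j < length \<pi> \<longrightarrow> \<pi> ! i < \<pi> ! j)}"

text \<open>Omega_{s,t}(W); index l is 0-based here, so paper's l is l+1.
 The condition w_l - s + l \<le> i_l \<le> w_l - 1 is written without truncating subtraction.\<close>
definition Omega :: "nat \<Rightarrow> nat \<Rightarrow> nat set \<Rightarrow> nat set set" where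
  "Omega s t W = {I. finite I \<and> card I = card W \<and>
     (\<forall>l < card W. sorted_list_of_set W ! l + (l + 1) \<le> sorted_list_of_set I ! l + s
                  \<and> sorted_list_of_set I ! l + 1 \<le> sorted_list_of_set W ! l)}"

definition Lambda :: "nat \<Rightarrow> nat \<Rightarrow> nat set \<Rightarrow> nat list set" where
  "Lambda s t W = {\<pi>. linear_extension s t \<pi> \<and> avoids_321 \<pi> \<and>
                       rl_minima \<pi> = {1..s*t} - W}"

definition mu_entry :: "nat \<Rightarrow> nat \<Rightarrow> nat set \<Rightarrow> nat set \<Rightarrow> nat \<Rightarrow> nat" where
  "mu_entry s t W I p =
     (if p \<in> I then sorted_list_of_set W ! card {q \<in> I. q < p}
      else sorted_list_of_set ({1..s*t} - W) ! card {q \<in> {1..s*t} - I. q < p})"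

definition mu :: "nat \<Rightarrow> nat \<Rightarrow> nat set \<Rightarrow> nat set \<Rightarrow> nat list" where
  "mu s t W I = map (mu_entry s t W I) [1..<s*t+1]"

end

(*
  mu_W(I) is the shuffle listing W increasingly at the positions in I and the complement of W
  increasingly at the remaining positions, and everything about it can be read off from ranks.
  A shuffle of two increasing sequences avoids 321. Comparing ranks shows that a position of I
  is a right-to-left minimum exactly when its entry does not exceed it, so the upper bound
  i_l < w_l of Omega makes the right-to-left minima exactly the entries outside W, while the
  lower bound w_l - s + l <= i_l makes the covers x < x + s of the comb that involve an element
  of W go the right way. I is recovered as the set of positions of W in mu_W(I), which gives
  injectivity. Conversely, in a 321-avoiding permutation the entries that are not right-to-left
  minima increase, so every element of Lambda is the shuffle attached to its positions of W;
  for t = 2 the entry w - s <= s lies below all of W and precedes w, which forces the lower bound.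
*)

theory Submission
  imports Defs
begin

section \<open>Ranks in sets of naturals\<close>

definition rank :: "nat set \<Rightarrow> nat \<Rightarrow> nat" where
  "rank A x = card {a \<in> A. a < x}"

lemma rank_mono: "x \<le> y \<Longrightarrow> rank A x \<le> rank A y"
  unfolding rank_def by (rule card_mono) auto

lemma rank_strict_mono: "x \<in> A \<Longrightarrow> x < y \<Longrightarrow> rank A x < rank A y"
  unfolding rank_def by (rule psubset_card_mono) auto

lemma less_if_rank_less: "rank A x < rank A y \<Longrightarrow> x < y"
  using rank_mono[of y x A] by (cases "x < y") auto

lemma less_if_rank_le: "y \<in> A \<Longrightarrow> x \<notin> A \<Longrightarrow> rank A x \<le> rank A y \<Longrightarrow> x < y"
  using rank_strict_mono[of y A x] by (cases x y rule: linorder_cases) auto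

lemma rank_less_card: "finite A \<Longrightarrow> x \<in> A \<Longrightarrow> rank A x < card A"
  unfolding rank_def by (rule psubset_card_mono) auto

lemma rank_le_card: "finite A \<Longrightarrow> rank A x \<le> card A"
  unfolding rank_def by (rule card_mono) auto

lemma rank_add_le: "rank A (x + k) \<le> rank A x + k"
proof -
  have "rank A (x + k) \<le> card ({a \<in> A. a < x} \<union> {x..<x + k})"
    unfolding rank_def by (rule card_mono) auto
  also have "\<dots> \<le> rank A x + k"
    unfolding rank_def using card_Un_le[of "{a \<in> A. a < x}" "{x..<x + k}"] by simp
  finally show ?thesis .
qed

lemma rank_Diff_add_rank:
  assumes "A \<subseteq> {1..n}" and "x \<in> {1..n}"
  shows "rank ({1..n} - A) x + rank A x + 1 = x"
proof -
  have "{a \<in> {1..n} - A. a < x} = {1..<x} - A" and "{a \<in> A. a < x} = {1..<x} \<inter> A"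
    using assms by auto
  moreover have "card ({1..<x} - A) + card ({1..<x} \<inter> A) = card {1..<x}"
    using card_Int_Diff[of "{1..<x}" A] by (simp add: Int_commute)
  ultimately show ?thesis
    unfolding rank_def using assms(2) by simp
qed

lemma nth_sorted_list_of_set_strict_mono:
  "finite A \<Longrightarrow> i < j \<Longrightarrow> j < card A \<Longrightarrow> sorted_list_of_set A ! i < sorted_list_of_set A ! j"
  by (metis sorted_list_of_set.length_sorted_key_list_of_set
      sorted_list_of_set.strict_sorted_key_list_of_set sorted_wrt_nth_less)

lemma nth_sorted_list_of_set_mem: "finite A \<Longrightarrow> i < card A \<Longrightarrow> sorted_list_of_set A ! i \<in> A"
  by (metis nth_mem sorted_list_of_set.length_sorted_key_list_of_set
      sorted_list_of_set.set_sorted_key_list_of_set)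

lemma rank_nth_sorted_list_of_set:
  assumes "finite A" and "i < card A"
  shows "rank A (sorted_list_of_set A ! i) = i"
proof -
  let ?L = "sorted_list_of_set A"
  have "{a \<in> A. a < ?L ! i} = set (take i ?L)"
  proof safe
    fix a assume "a \<in> A" and a_less: "a < ?L ! i"
    then obtain j where j: "j < card A" "a = ?L ! j"
      by (metis assms(1) in_set_conv_nth sorted_list_of_set.length_sorted_key_list_of_set
          sorted_list_of_set.set_sorted_key_list_of_set)
    have "j < i"
      using nth_sorted_list_of_set_strict_mono[OF assms(1), of i j] j a_less
      by (cases i j rule: linorder_cases) auto
    then show "a \<in> set (take i ?L)"
      using j assms by (auto simp: in_set_conv_nth)
  next
    fix a assume "a \<in> set (take i ?L)"
    then obtain j where "j < i" "a = ?L ! j"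
      using assms by (auto simp: in_set_conv_nth)
    then show "a \<in> A" and "a < ?L ! i"
      using assms nth_sorted_list_of_set_mem[OF assms(1), of j]
        nth_sorted_list_of_set_strict_mono[OF assms(1), of j i] by auto
  qed
  then show ?thesis
    unfolding rank_def using assms by (simp add: distinct_card)
qed

lemma nth_sorted_list_of_set_rank: "finite A \<Longrightarrow> a \<in> A \<Longrightarrow> sorted_list_of_set A ! rank A a = a"
  by (metis in_set_conv_nth rank_nth_sorted_list_of_set
      sorted_list_of_set.length_sorted_key_list_of_set sorted_list_of_set.set_sorted_key_list_of_set)

lemma all_less_card_iff_all_rank:
  assumes "finite A"
  shows "(\<forall>l < card A. P l (sorted_list_of_set A ! l)) \<longleftrightarrow> (\<forall>a \<in> A. P (rank A a) a)"
  using assms nth_sorted_list_of_set_mem rank_nth_sorted_list_of_set nth_sorted_list_of_set_rank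
    rank_less_card by metis

lemma rank_image_strict_mono_on:
  fixes g :: "nat \<Rightarrow> nat"
  assumes "strict_mono_on A g" and "a \<in> A"
  shows "rank (g ` A) (g a) = rank A a"
proof -
  have "{b \<in> g ` A. b < g a} = g ` {x \<in> A. x < a}"
    using strict_mono_on_less[OF assms(1) _ assms(2)] by auto
  moreover have "inj_on g {x \<in> A. x < a}"
    using strict_mono_on_imp_inj_on[OF assms(1)] by (rule inj_on_subset) auto
  ultimately show ?thesis
    unfolding rank_def by (simp add: card_image)
qed

definition rank_match :: "nat set \<Rightarrow> nat set \<Rightarrow> nat \<Rightarrow> nat" where
  "rank_match A B a = sorted_list_of_set B ! rank A a"

context
  fixes A B :: "nat set"
  assumes finite: "finite A" "finite B" and card_eq: "card A = card B"
begin

lemma rank_match_mem: "a \<in> A \<Longrightarrow> rank_match A B a \<in> B"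
  unfolding rank_match_def
  using nth_sorted_list_of_set_mem rank_less_card finite card_eq by metis

lemma rank_rank_match: "a \<in> A \<Longrightarrow> rank B (rank_match A B a) = rank A a"
  unfolding rank_match_def
  using rank_nth_sorted_list_of_set rank_less_card finite card_eq by metis

lemma strict_mono_on_rank_match: "strict_mono_on A (rank_match A B)"
proof (rule strict_mono_onI)
  fix a b assume "a \<in> A" "b \<in> A" "a < b"
  then have "rank A a < rank A b" and "rank A b < card B"
    using rank_strict_mono rank_less_card finite card_eq by metis+
  then show "rank_match A B a < rank_match A B b"
    unfolding rank_match_def by (rule nth_sorted_list_of_set_strict_mono[OF finite(2)])
qed

lemma rank_match_image: "rank_match A B ` A = B"
proof (rule card_subset_eq[OF finite(2)])
  show "rank_match A B ` A \<subseteq> B"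
    using rank_match_mem by blast
  show "card (rank_match A B ` A) = card B"
    using card_image[OF strict_mono_on_imp_inj_on[OF strict_mono_on_rank_match]] card_eq by simp
qed

end

lemma strict_mono_on_eq_rank_match:
  fixes g :: "nat \<Rightarrow> nat"
  assumes "finite A" and "strict_mono_on A g" and "a \<in> A"
  shows "g a = rank_match A (g ` A) a"
  unfolding rank_match_def
  using nth_sorted_list_of_set_rank[of "g ` A" "g a"] rank_image_strict_mono_on[OF assms(2,3)]
    assms by simp


section \<open>Permutations as functions on the positions 1, ..., n\<close>

lemma set_map_upt: "set (map g [1..<n+1]) = g ` {1..n}"
  by (simp del: upt_Suc add: atLeastLessThanSuc_atLeastAtMost)

lemma map_nth_upt: "length \<pi> = n \<Longrightarrow> map (\<lambda>p. \<pi> ! (p - 1)) [1..<n+1] = \<pi>"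
  by (rule nth_equalityI) (simp_all del: upt_Suc)

lemma is_perm_map_upt_iff: "is_perm n (map g [1..<n+1]) \<longleftrightarrow> bij_betw g {1..n} {1..n}"
  unfolding is_perm_def bij_betw_def set_map_upt
  by (simp del: upt_Suc add: distinct_map atLeastLessThanSuc_atLeastAtMost)

lemma precedes_map_upt:
  "precedes (map g [1..<n+1]) x y \<longleftrightarrow> (\<exists>p q. 1 \<le> p \<and> p < q \<and> q \<le> n \<and> g p = x \<and> g q = y)"
  unfolding precedes_def
proof safe
  fix i j assume ij: "i < j" "j < length (map g [1..<n+1])"
  show "\<exists>p q. 1 \<le> p \<and> p < q \<and> q \<le> n \<and> g p = map g [1..<n+1] ! i \<and> g q = map g [1..<n+1] ! j"
    by (rule exI[of _ "i + 1"], rule exI[of _ "j + 1"]) (use ij in \<open>simp del: upt_Suc\<close>)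
next
  fix p q assume pq: "1 \<le> p" "p < q" "q \<le> n"
  show "\<exists>i j. i < j \<and> j < length (map g [1..<n+1]) \<and> map g [1..<n+1] ! i = g p \<and> map g [1..<n+1] ! j = g q"
    by (rule exI[of _ "p - 1"], rule exI[of _ "q - 1"]) (use pq in \<open>auto simp del: upt_Suc\<close>)
qed

lemma avoids_321_map_upt:
  "avoids_321 (map g [1..<n+1]) \<longleftrightarrow>
     \<not> (\<exists>p q r. 1 \<le> p \<and> p < q \<and> q < r \<and> r \<le> n \<and> g q < g p \<and> g r < g q)"
  unfolding avoids_321_def Not_eq_iff
proof safe
  fix i j k assume ijk: "i < j" "j < k" "k < length (map g [1..<n+1])"
    "map g [1..<n+1] ! j < map g [1..<n+1] ! i" "map g [1..<n+1] ! k < map g [1..<n+1] ! j"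
  show "\<exists>p q r. 1 \<le> p \<and> p < q \<and> q < r \<and> r \<le> n \<and> g q < g p \<and> g r < g q"
    by (rule exI[of _ "i + 1"], rule exI[of _ "j + 1"], rule exI[of _ "k + 1"])
      (use ijk in \<open>auto simp del: upt_Suc\<close>)
next
  fix p q r assume pqr: "1 \<le> p" "p < q" "q < r" "r \<le> n" "g q < g p" "g r < g q"
  show "\<exists>i j k. i < j \<and> j < k \<and> k < length (map g [1..<n+1]) \<and>
      map g [1..<n+1] ! j < map g [1..<n+1] ! i \<and> map g [1..<n+1] ! k < map g [1..<n+1] ! j"
    by (rule exI[of _ "p - 1"], rule exI[of _ "q - 1"], rule exI[of _ "r - 1"])
      (use pqr in \<open>auto simp del: upt_Suc\<close>)
qed

definition rl_min_at :: "nat \<Rightarrow> (nat \<Rightarrow> nat) \<Rightarrow> nat \<Rightarrow> bool" where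
  "rl_min_at n g p \<longleftrightarrow> (\<forall>q. p < q \<and> q \<le> n \<longrightarrow> g p < g q)"

lemma rl_minima_map_upt: "rl_minima (map g [1..<n+1]) = g ` {p \<in> {1..n}. rl_min_at n g p}"
  unfolding rl_minima_def rl_min_at_def
proof safe
  fix i assume i: "i < length (map g [1..<n+1])"
    and min: "\<forall>j. i < j \<and> j < length (map g [1..<n+1]) \<longrightarrow> map g [1..<n+1] ! i < map g [1..<n+1] ! j"
  have "g (i + 1) < g q" if "i + 1 < q" "q \<le> n" for q
    using that min[rule_format, of "q - 1"] by (simp del: upt_Suc add: less_diff_conv)
  then show "map g [1..<n+1] ! i \<in> g ` {p \<in> {1..n}. \<forall>q. p < q \<and> q \<le> n \<longrightarrow> g p < g q}"
    using i by (intro image_eqI[of _ _ "i + 1"]) (auto simp del: upt_Suc)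
next
  fix p assume "p \<in> {1..n}" and min: "\<forall>q. p < q \<and> q \<le> n \<longrightarrow> g p < g q"
  then show "\<exists>i. g p = map g [1..<n+1] ! i \<and> i < length (map g [1..<n+1]) \<and>
      (\<forall>j. i < j \<and> j < length (map g [1..<n+1]) \<longrightarrow> map g [1..<n+1] ! i < map g [1..<n+1] ! j)"
    by (intro exI[of _ "p - 1"]) (auto simp del: upt_Suc)
qed

definition positions :: "nat list \<Rightarrow> nat set \<Rightarrow> nat set" where
  "positions \<pi> V = {p \<in> {1..length \<pi>}. \<pi> ! (p - 1) \<in> V}"

lemma positions_map_upt: "positions (map g [1..<n+1]) V = {p \<in> {1..n}. g p \<in> V}"
  unfolding positions_def by (auto simp del: upt_Suc)

lemma comb_cover_bounds:
  assumes "0 < t" and "comb_cover s t x y"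
  shows "1 \<le> x \<and> x < y \<and> y \<le> s * t"
proof -
  have st: "s \<le> s * t"
    using assms(1) by simp
  from assms(2) consider "1 \<le> x" "x \<le> s - 1" "y = x + 1" | "1 \<le> x" "x + s \<le> s * t" "y = x + s"
    unfolding comb_cover_def by blast
  then show ?thesis
  proof cases
    case 1
    then show ?thesis
      using st by linarith
  next
    case 2
    moreover have "s \<noteq> 0"
      using 2 by (cases s) auto
    ultimately show ?thesis
      by linarith
  qed
qed

lemma linear_extension_map_upt:
  assumes "0 < t" and bij: "bij_betw g {1..s*t} {1..s*t}"
    and cover: "\<And>p q. p \<in> {1..s*t} \<Longrightarrow> q \<in> {1..s*t} \<Longrightarrow> comb_cover s t (g p) (g q) \<Longrightarrow> p < q"
  shows "linear_extension s t (map g [1..<s*t+1])"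
  unfolding linear_extension_def is_perm_map_upt_iff comb_less_def precedes_map_upt
proof (intro conjI bij allI impI)
  fix x y assume "(comb_cover s t)\<^sup>+\<^sup>+ x y"
  then show "\<exists>p q. 1 \<le> p \<and> p < q \<and> q \<le> s * t \<and> g p = x \<and> g q = y"
  proof (induction rule: tranclp_trans_induct[consumes 1, case_names base step])
    case (base x y)
    have "x \<in> g ` {1..s*t}" and "y \<in> g ` {1..s*t}"
      using comb_cover_bounds[OF assms(1) base] bij by (auto simp: bij_betw_def)
    then obtain p q where "p \<in> {1..s*t}" "q \<in> {1..s*t}" "g p = x" "g q = y"
      by blast
    moreover from this have "p < q"
      using cover base by blast
    ultimately show ?case
      by auto
  next
    case (step x y z)
    then obtain p q q' r where "1 \<le> p" "p < q" "q \<le> s * t" "g p = x" "g q = y"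
      and "1 \<le> q'" "q' < r" "r \<le> s * t" "g q' = y" "g r = z"
      by blast
    moreover have "q = q'"
      using inj_onD[OF bij_betw_imp_inj_on[OF bij], of q q'] calculation by simp
    ultimately show ?case
      by (metis order_less_trans)
  qed
qed


section \<open>Increasing subsequences, 321-avoidance and right-to-left minima\<close>

lemma avoids_321_if_strict_mono_on_Un:
  assumes "strict_mono_on A g" and "strict_mono_on B g" and "{1..n} \<subseteq> A \<union> B"
  shows "avoids_321 (map g [1..<n+1])"
  unfolding avoids_321_map_upt
proof clarify
  fix p q r assume pqr: "1 \<le> p" "p < q" "q < r" "r \<le> n" "g q < g p" "g r < g q"
  have not_two: "\<not> (p \<in> X \<and> q \<in> X)" "\<not> (q \<in> X \<and> r \<in> X)" "\<not> (p \<in> X \<and> r \<in> X)"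
    if "strict_mono_on X g" for X
    using that strict_mono_onD[of X g p q] strict_mono_onD[of X g q r] strict_mono_onD[of X g p r] pqr
    by auto
  have "p \<in> A \<union> B" "q \<in> A \<union> B" "r \<in> A \<union> B"
    using subsetD[OF assms(3)] pqr by auto
  then show False
    using not_two[OF assms(1)] not_two[OF assms(2)] by auto
qed

lemma strict_mono_on_rl_min: "strict_mono_on {p \<in> {1..n}. rl_min_at n g p} g"
  by (rule strict_mono_onI) (auto simp: rl_min_at_def)

lemma strict_mono_on_not_rl_min:
  assumes "avoids_321 (map g [1..<n+1])" and "inj_on g {1..n}"
  shows "strict_mono_on {p \<in> {1..n}. \<not> rl_min_at n g p} g"
proof (rule strict_mono_onI)
  fix p q assume p: "p \<in> {p \<in> {1..n}. \<not> rl_min_at n g p}"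
    and q: "q \<in> {p \<in> {1..n}. \<not> rl_min_at n g p}" and "p < q"
  from q obtain r where r: "q < r" "r \<le> n" "\<not> g q < g r"
    unfolding rl_min_at_def by blast
  have "g r < g q"
    using r q inj_on_contraD[OF assms(2), of r q] by auto
  moreover have "g q \<noteq> g p"
    using p q \<open>p < q\<close> inj_on_contraD[OF assms(2), of q p] by auto
  ultimately show "g p < g q"
    using assms(1) p r \<open>p < q\<close> unfolding avoids_321_map_upt
    by (metis atLeastAtMost_iff linorder_neqE_nat mem_Collect_eq)
qed

lemma rl_min_at_iff_not_mem:
  assumes bij: "bij_betw g {1..n} {1..n}" and rl: "rl_minima (map g [1..<n+1]) = {1..n} - W"
    and p: "p \<in> {1..n}"
  shows "rl_min_at n g p \<longleftrightarrow> g p \<notin> W"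
proof
  assume "rl_min_at n g p"
  then have "g p \<in> rl_minima (map g [1..<n+1])"
    unfolding rl_minima_map_upt using p by simp
  then show "g p \<notin> W"
    unfolding rl by simp
next
  assume "g p \<notin> W"
  then have "g p \<in> g ` {p \<in> {1..n}. rl_min_at n g p}"
    unfolding rl_minima_map_upt[symmetric] rl using bij_betw_apply[OF bij p] by simp
  then obtain p' where p': "p' \<in> {1..n}" "rl_min_at n g p'" "g p' = g p"
    by auto
  then have "p' = p"
    using inj_onD[OF bij_betw_imp_inj_on[OF bij] p'(3)] p by simp
  then show "rl_min_at n g p"
    using p' by simp
qed

lemma strict_mono_on_split_by_rl_minima:
  assumes bij: "bij_betw g {1..n} {1..n}" and avoids: "avoids_321 (map g [1..<n+1])"
    and rl: "rl_minima (map g [1..<n+1]) = {1..n} - W"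
  shows "strict_mono_on {p \<in> {1..n}. g p \<in> W} g" and "strict_mono_on {p \<in> {1..n}. g p \<notin> W} g"
proof -
  have "{p \<in> {1..n}. g p \<in> W} = {p \<in> {1..n}. \<not> rl_min_at n g p}"
    and "{p \<in> {1..n}. g p \<notin> W} = {p \<in> {1..n}. rl_min_at n g p}"
    using rl_min_at_iff_not_mem[OF bij rl] by auto
  then show "strict_mono_on {p \<in> {1..n}. g p \<in> W} g" and "strict_mono_on {p \<in> {1..n}. g p \<notin> W} g"
    using strict_mono_on_not_rl_min[OF avoids bij_betw_imp_inj_on[OF bij]] strict_mono_on_rl_min
    by simp_all
qed

lemma image_preimage_bij_betw:
  assumes "bij_betw g A B" and "W \<subseteq> B"
  shows "g ` {a \<in> A. g a \<in> W} = W" and "g ` {a \<in> A. g a \<notin> W} = B - W"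
proof -
  have "g ` A = B"
    using assms(1) by (simp add: bij_betw_def)
  then show "g ` {a \<in> A. g a \<in> W} = W" and "g ` {a \<in> A. g a \<notin> W} = B - W"
    using assms(2) by blast+
qed



section \<open>The shuffle of two increasing sequences\<close>

locale shuffle =
  fixes s t :: nat and W I :: "nat set"
  assumes W_subset: "W \<subseteq> {1..s*t}" and I_subset: "I \<subseteq> {1..s*t}" and card_I: "card I = card W"
begin

abbreviation entry :: "nat \<Rightarrow> nat" where
  "entry \<equiv> mu_entry s t W I"

abbreviation Ic :: "nat set" where
  "Ic \<equiv> {1..s*t} - I"

abbreviation Wc :: "nat set" where
  "Wc \<equiv> {1..s*t} - W"

lemma finite_W: "finite W"
  using W_subset finite_subset by blast

lemma finite_I: "finite I"
  using I_subset finite_subset by blast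

lemma card_Ic: "card Ic = card Wc"
  using W_subset I_subset card_I by (simp add: card_Diff_subset finite_W finite_I)

lemma entry_I: "p \<in> I \<Longrightarrow> entry p = rank_match I W p"
  unfolding mu_entry_def rank_match_def rank_def by simp

lemma entry_Ic: "p \<in> Ic \<Longrightarrow> entry p = rank_match Ic Wc p"
  unfolding mu_entry_def rank_match_def rank_def by simp

lemma entry_I_mem: "p \<in> I \<Longrightarrow> entry p \<in> W"
  using entry_I rank_match_mem finite_I finite_W card_I by simp

lemma entry_Ic_mem: "p \<in> Ic \<Longrightarrow> entry p \<in> Wc"
  using entry_Ic rank_match_mem[of Ic Wc] card_Ic by simp

lemma rank_entry_I: "p \<in> I \<Longrightarrow> rank W (entry p) = rank I p"
  using entry_I rank_rank_match finite_I finite_W card_I by simp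

lemma rank_entry_Ic: "p \<in> Ic \<Longrightarrow> rank Wc (entry p) = rank Ic p"
  using entry_Ic rank_rank_match[of Ic Wc] card_Ic by simp

lemma strict_mono_on_entry_I: "strict_mono_on I entry"
  using strict_mono_on_rank_match[OF finite_I finite_W card_I] entry_I
  by (simp add: strict_mono_on_def)

lemma strict_mono_on_entry_Ic: "strict_mono_on Ic entry"
  using strict_mono_on_rank_match[of Ic Wc] card_Ic entry_Ic
  by (simp add: strict_mono_on_def)

lemma entry_image_I: "entry ` I = W"
  using rank_match_image[OF finite_I finite_W card_I] entry_I by simp

lemma entry_image_Ic: "entry ` Ic = Wc"
  using rank_match_image[of Ic Wc] card_Ic entry_Ic by simp

lemma bij_betw_entry: "bij_betw entry {1..s*t} {1..s*t}"
proof -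
  have "entry ` {1..s*t} = entry ` I \<union> entry ` Ic"
    using I_subset by blast
  also have "\<dots> = {1..s*t}"
    using entry_image_I entry_image_Ic W_subset by blast
  finally show ?thesis
    by (simp add: bij_betw_def eq_card_imp_inj_on)
qed

lemma eq_entry_if_strict_mono_on:
  assumes "strict_mono_on I g" "strict_mono_on Ic g" "g ` I = W" "g ` Ic = Wc" and "p \<in> {1..s*t}"
  shows "g p = entry p"
  using strict_mono_on_eq_rank_match[OF finite_I assms(1)] entry_I
    strict_mono_on_eq_rank_match[of Ic g] assms entry_Ic by (cases "p \<in> I") auto

lemma positions_mu: "positions (mu s t W I) W = I"
  unfolding mu_def positions_map_upt
  using I_subset entry_I_mem entry_Ic_mem by auto

lemma avoids_321_mu: "avoids_321 (mu s t W I)"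
  unfolding mu_def
  by (rule avoids_321_if_strict_mono_on_Un[OF strict_mono_on_entry_I strict_mono_on_entry_Ic]) blast

lemma rank_Ic_add_rank_I: "p \<in> I \<Longrightarrow> rank Ic p + rank I p + 1 = p"
  using rank_Diff_add_rank[OF I_subset] I_subset by blast

lemma rank_Wc_entry_add_rank_I: "p \<in> I \<Longrightarrow> rank Wc (entry p) + rank I p + 1 = entry p"
  using rank_Diff_add_rank[OF W_subset] entry_I_mem rank_entry_I W_subset by (metis subsetD)

lemma rank_Ic_add_rank_W_entry: "p \<in> Ic \<Longrightarrow> rank Ic p + rank W (entry p) + 1 = entry p"
  using rank_Diff_add_rank[OF W_subset] entry_Ic_mem rank_entry_Ic by (metis Diff_iff)

lemma not_rl_min_at_if_less_entry:
  assumes p: "p \<in> I" and less: "p < entry p"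
  shows "\<not> rl_min_at (s*t) entry p"
proof -
  have "rank Ic p < rank Wc (entry p)"
    using rank_Ic_add_rank_I[OF p] rank_Wc_entry_add_rank_I[OF p] less by linarith
  also have "\<dots> \<le> card Ic"
    using rank_le_card card_Ic by simp
  finally have "rank Ic p < card Ic" .
  define q where "q = sorted_list_of_set Ic ! rank Ic p"
  have q: "q \<in> Ic" "rank Ic q = rank Ic p"
    unfolding q_def using nth_sorted_list_of_set_mem[of Ic] rank_nth_sorted_list_of_set[of Ic]
      \<open>rank Ic p < card Ic\<close> by simp_all
  have "p < q"
    using less_if_rank_le[of q Ic p] q p by simp
  moreover have "entry q < entry p"
    using less_if_rank_less[of Wc] rank_entry_Ic q \<open>rank Ic p < rank Wc (entry p)\<close> by simp
  ultimately show ?thesis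
    using q unfolding rl_min_at_def by auto
qed

lemma rl_min_at_if_entry_le:
  assumes p: "p \<in> I" and le: "entry p \<le> p"
  shows "rl_min_at (s*t) entry p"
  unfolding rl_min_at_def
proof clarify
  fix q assume "p < q" "q \<le> s * t"
  show "entry p < entry q"
  proof (cases "q \<in> I")
    case True
    then show ?thesis
      using strict_mono_onD[OF strict_mono_on_entry_I] p \<open>p < q\<close> by blast
  next
    case False
    then have q: "q \<in> Ic"
      using \<open>p < q\<close> \<open>q \<le> s * t\<close> p I_subset by auto
    have "rank Ic p \<le> rank Ic q"
      using rank_mono \<open>p < q\<close> by simp
    then have "rank Wc (entry p) \<le> rank Wc (entry q)"
      using rank_entry_Ic[OF q] rank_Ic_add_rank_I[OF p] rank_Wc_entry_add_rank_I[OF p] le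
      by linarith
    then show ?thesis
      using less_if_rank_le[of "entry q" Wc] entry_Ic_mem[OF q] entry_I_mem[OF p] by simp
  qed
qed

lemma rl_min_at_if_mem_Ic:
  assumes exceed: "\<forall>q \<in> I. q < entry q" and p: "p \<in> Ic"
  shows "rl_min_at (s*t) entry p"
  unfolding rl_min_at_def
proof clarify
  fix q assume "p < q" "q \<le> s * t"
  show "entry p < entry q"
  proof (cases "q \<in> I")
    case True
    have "rank Wc (entry p) = rank Ic p"
      using rank_entry_Ic[OF p] .
    also have "\<dots> \<le> rank Ic q"
      using rank_mono \<open>p < q\<close> by simp
    also have "\<dots> < rank Wc (entry q)"
      using rank_Ic_add_rank_I[OF True] rank_Wc_entry_add_rank_I[OF True] exceed True
      by fastforce
    finally show ?thesis
      using less_if_rank_less[of Wc] by simp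
  next
    case False
    then show ?thesis
      using strict_mono_onD[OF strict_mono_on_entry_Ic] p \<open>p < q\<close> \<open>q \<le> s * t\<close> by auto
  qed
qed

lemma rl_minima_mu:
  assumes "\<forall>q \<in> I. q < entry q"
  shows "rl_minima (mu s t W I) = Wc"
proof -
  have "{p \<in> {1..s*t}. rl_min_at (s*t) entry p} = Ic"
    using assms not_rl_min_at_if_less_entry rl_min_at_if_mem_Ic by blast
  then show ?thesis
    unfolding mu_def rl_minima_map_upt using entry_image_Ic by simp
qed

lemma less_entry_if_rl_minima_mu:
  assumes "rl_minima (mu s t W I) = Wc" and "p \<in> I"
  shows "p < entry p"
proof -
  have "\<not> rl_min_at (s*t) entry p"
    using assms entry_I_mem I_subset unfolding mu_def rl_minima_map_upt by blast
  then show ?thesis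
    using rl_min_at_if_entry_le[OF assms(2)] by linarith
qed

lemma Ic_before_I_bound:
  assumes "p \<in> I" and "q \<in> Ic" and "q < p"
  shows "entry q + rank I p + 1 \<le> p + rank W (entry q)"
proof -
  have "rank Ic q < rank Ic p"
    using rank_strict_mono assms by simp
  then show ?thesis
    using rank_Ic_add_rank_I[OF assms(1)] rank_Ic_add_rank_W_entry[OF assms(2)] by linarith
qed

lemma entry_bound_if_linear_extension:
  assumes lin: "linear_extension s t (mu s t W I)" and W_above: "W \<subseteq> {s+1..s*t}"
    and p: "p \<in> I" and not_W: "entry p - s \<notin> W"
  shows "entry p + rank I p + 1 \<le> p + s + rank W (entry p - s)"
proof -
  define x where "x = entry p - s"
  have x: "1 \<le> x" "x + s = entry p" "x + s \<le> s * t"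
    using subsetD[OF W_above entry_I_mem[OF p]] unfolding x_def by auto
  then have "comb_cover s t x (entry p)"
    unfolding comb_cover_def by auto
  then have "precedes (mu s t W I) x (entry p)"
    using lin unfolding linear_extension_def comb_less_def by blast
  then obtain a b where ab: "1 \<le> a" "a < b" "b \<le> s * t" "entry a = x" "entry b = entry p"
    unfolding mu_def precedes_map_upt by blast
  have "b = p"
    using inj_onD[OF bij_betw_imp_inj_on[OF bij_betw_entry] ab(5)] ab p I_subset by auto
  moreover have "a \<in> Ic"
    using ab entry_I_mem not_W unfolding x_def by fastforce
  ultimately have "x + rank I p + 1 \<le> p + rank W x"
    using Ic_before_I_bound[OF p, of a] ab by simp
  then show ?thesis
    using x unfolding x_def by linarith
qed

lemma less_if_entry_I_add_eq_entry_Ic: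
  assumes "p \<in> I" and "q \<in> Ic" and "p < entry p" and "entry q = entry p + s"
  shows "p < q"
proof -
  have "rank W (entry q) \<le> rank I p + s"
    using rank_add_le[of W "entry p" s] rank_entry_I[OF assms(1)] assms(4) by simp
  then have "rank Ic p \<le> rank Ic q"
    using rank_Ic_add_rank_I[OF assms(1)] rank_Ic_add_rank_W_entry[OF assms(2)] assms(3,4)
    by linarith
  then show ?thesis
    using less_if_rank_le[of q Ic p] assms(1,2) by simp
qed

lemma less_if_entry_Ic_add_eq_entry_I:
  assumes "p \<in> Ic" and "q \<in> I" and "entry q + rank I q + 1 \<le> q + s" and "entry q = entry p + s"
  shows "p < q"
proof -
  have "rank Ic p < rank Ic q"
    using rank_Ic_add_rank_I[OF assms(2)] rank_Ic_add_rank_W_entry[OF assms(1)] assms(3,4)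
    by linarith
  then show ?thesis
    by (rule less_if_rank_less)
qed

end


section \<open>The map mu from Omega to Lambda\<close>

lemma Omega_iff_rank_match:
  assumes "finite I" and "card I = card W"
  shows "I \<in> Omega s t W \<longleftrightarrow>
    (\<forall>p \<in> I. p < rank_match I W p \<and> rank_match I W p + rank I p + 1 \<le> p + s)"
proof -
  have "I \<in> Omega s t W \<longleftrightarrow> (\<forall>l < card I. sorted_list_of_set W ! l + (l + 1) \<le> sorted_list_of_set I ! l + s
      \<and> sorted_list_of_set I ! l + 1 \<le> sorted_list_of_set W ! l)"
    unfolding Omega_def using assms by simp
  also have "\<dots> \<longleftrightarrow> (\<forall>p \<in> I. sorted_list_of_set W ! rank I p + (rank I p + 1) \<le> p + s
      \<and> p + 1 \<le> sorted_list_of_set W ! rank I p)"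
    by (rule all_less_card_iff_all_rank[OF assms(1)])
  finally show ?thesis
    unfolding rank_match_def by (auto simp: Suc_le_eq)
qed

lemma Omega_subset:
  assumes "W \<subseteq> {s+1..s*t}" and "I \<in> Omega s t W"
  shows "I \<subseteq> {1..s*t}"
proof
  fix p assume p: "p \<in> I"
  have fin: "finite I" "finite W" and card: "card I = card W"
    using assms finite_subset unfolding Omega_def by auto
  have "rank_match I W p \<in> W"
    using rank_match_mem[OF fin card p] .
  moreover have "p < rank_match I W p \<and> rank_match I W p + rank I p + 1 \<le> p + s"
    using Omega_iff_rank_match[OF fin(1) card] assms(2) p by blast
  ultimately show "p \<in> {1..s*t}"
    using assms(1) by auto
qed

lemma shuffle_if_Omega:
  assumes "W \<subseteq> {s+1..s*t}" and "I \<in> Omega s t W"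
  shows "shuffle s t W I"
proof unfold_locales
  show "W \<subseteq> {1..s*t}" and "I \<subseteq> {1..s*t}" and "card I = card W"
    using assms Omega_subset[OF assms] unfolding Omega_def by auto
qed

context shuffle
begin

lemma Omega_iff: "I \<in> Omega s t W \<longleftrightarrow> (\<forall>p \<in> I. p < entry p \<and> entry p + rank I p + 1 \<le> p + s)"
  using Omega_iff_rank_match[OF finite_I card_I] entry_I by auto

lemma less_if_comb_cover_entry:
  assumes W_above: "W \<subseteq> {s+1..s*t}" and "I \<in> Omega s t W"
    and p: "p \<in> {1..s*t}" and q: "q \<in> {1..s*t}" and cover: "comb_cover s t (entry p) (entry q)"
  shows "p < q"
proof -
  have bounds: "\<forall>p \<in> I. p < entry p \<and> entry p + rank I p + 1 \<le> p + s"
    using assms(2) Omega_iff by simp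
  have "0 < t"
    using p by (cases t) auto
  then have less: "entry p < entry q"
    using comb_cover_bounds cover by blast
  \<comment> \<open>Entries of W exceed s, so a cover involving one is a step x < x + s.\<close>
  have jump: "entry q = entry p + s" if "entry p \<in> W \<or> entry q \<in> W"
  proof -
    have "s < entry q"
      using that W_above less by auto
    then show ?thesis
      using cover unfolding comb_cover_def by auto
  qed
  consider "p \<in> I" "q \<in> I" | "p \<in> Ic" "q \<in> Ic" | "p \<in> I" "q \<in> Ic" | "p \<in> Ic" "q \<in> I"
    using p q by blast
  then show ?thesis
  proof cases
    case 1
    then show ?thesis
      using strict_mono_on_less[OF strict_mono_on_entry_I] less by blast
  next
    case 2
    then show ?thesis
      using strict_mono_on_less[OF strict_mono_on_entry_Ic] less by blast
  next
    case 3
    then show ?thesis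
      using less_if_entry_I_add_eq_entry_Ic jump entry_I_mem bounds by blast
  next
    case 4
    then show ?thesis
      using less_if_entry_Ic_add_eq_entry_I jump entry_I_mem bounds by blast
  qed
qed

lemma mu_in_Lambda:
  assumes "0 < t" and "W \<subseteq> {s+1..s*t}" and "I \<in> Omega s t W"
  shows "mu s t W I \<in> Lambda s t W"
  unfolding Lambda_def
proof (intro CollectI conjI)
  show "linear_extension s t (mu s t W I)"
    unfolding mu_def
    using linear_extension_map_upt[OF assms(1) bij_betw_entry] less_if_comb_cover_entry[OF assms(2,3)]
    by blast
  show "avoids_321 (mu s t W I)"
    by (rule avoids_321_mu)
  show "rl_minima (mu s t W I) = Wc"
    using rl_minima_mu assms(3) Omega_iff by simp
qed

end


section \<open>Inverting mu\<close>

lemma Lambda_positions: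
  assumes "\<pi> \<in> Lambda s t W" and W_subset: "W \<subseteq> {1..s*t}"
  shows "shuffle s t W (positions \<pi> W)" and "mu s t W (positions \<pi> W) = \<pi>"
proof -
  let ?n = "s * t" and ?I = "positions \<pi> W"
  define g where "g p = \<pi> ! (p - 1)" for p
  have perm: "is_perm ?n \<pi>" and avoids: "avoids_321 \<pi>" and rl: "rl_minima \<pi> = {1..?n} - W"
    using assms(1) unfolding Lambda_def linear_extension_def by auto
  then have "length \<pi> = ?n"
    unfolding is_perm_def using distinct_card by fastforce
  then have \<pi>: "\<pi> = map g [1..<?n+1]"
    unfolding g_def by (rule map_nth_upt[symmetric])
  have bij: "bij_betw g {1..?n} {1..?n}"
    using perm unfolding \<pi> is_perm_map_upt_iff .
  have I: "?I = {p \<in> {1..?n}. g p \<in> W}" and Ic: "{1..?n} - ?I = {p \<in> {1..?n}. g p \<notin> W}"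
    unfolding \<pi> positions_map_upt by auto
  note mono = strict_mono_on_split_by_rl_minima[OF bij avoids[unfolded \<pi>] rl[unfolded \<pi>]]
  note image = image_preimage_bij_betw[OF bij W_subset]
  show sh: "shuffle s t W ?I"
  proof unfold_locales
    show "W \<subseteq> {1..s*t}" and "?I \<subseteq> {1..s*t}"
      using W_subset I by auto
    show "card ?I = card W"
      using card_image[OF inj_on_subset[OF bij_betw_imp_inj_on[OF bij]]] image(1) unfolding I
      by (metis (no_types, lifting) mem_Collect_eq subsetI)
  qed
  have "g p = mu_entry s t W ?I p" if "p \<in> {1..?n}" for p
    using shuffle.eq_entry_if_strict_mono_on[OF sh, of g, unfolded Ic, unfolded I, OF mono image that]
    unfolding I .
  then show "mu s t W ?I = \<pi>"
    unfolding mu_def \<pi> by (simp del: upt_Suc add: atLeastLessThanSuc_atLeastAtMost)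
qed

lemma positions_in_Omega:
  assumes Lambda: "\<pi> \<in> Lambda s 2 W" and W_above: "W \<subseteq> {s+1..s*2}"
  shows "positions \<pi> W \<in> Omega s 2 W"
proof -
  let ?I = "positions \<pi> W"
  have W_subset: "W \<subseteq> {1..s*2}"
    using W_above by auto
  interpret shuffle s 2 W ?I
    by (rule Lambda_positions(1)[OF Lambda W_subset])
  have rl: "rl_minima (mu s 2 W ?I) = Wc" and lin: "linear_extension s 2 (mu s 2 W ?I)"
    using Lambda Lambda_positions(2)[OF Lambda W_subset] unfolding Lambda_def by auto
  have "entry p + rank ?I p + 1 \<le> p + s" if p: "p \<in> ?I" for p
  proof -
    have "entry p \<le> s * 2"
      using subsetD[OF W_above entry_I_mem[OF p]] by simp
    then have "entry p - s \<le> s"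
      by linarith
    then have "entry p - s \<notin> W" and "rank W (entry p - s) = 0"
      using W_above unfolding rank_def by fastforce+
    then show ?thesis
      using entry_bound_if_linear_extension[OF lin W_above p] by simp
  qed
  then show ?thesis
    unfolding Omega_iff using less_entry_if_rl_minima_mu[OF rl] by blast
qed

theorem theorem3:
  fixes s t :: nat and W :: "nat set"
  assumes "s \<ge> 2" and "t \<ge> 2" and "W \<subseteq> {s+1..s*t}"
  shows "(\<forall>I \<in> Omega s t W. mu s t W I \<in> Lambda s t W)
         \<and> inj_on (mu s t W) (Omega s t W)
         \<and> (t = 2 \<longrightarrow> bij_betw (mu s t W) (Omega s t W) (Lambda s t W))"
proof -
  have in_Lambda: "mu s t W I \<in> Lambda s t W" if "I \<in> Omega s t W" for I
    using shuffle.mu_in_Lambda[OF shuffle_if_Omega[OF assms(3) that]] assms(2,3) that by simp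
  have left_inverse: "positions (mu s t W I) W = I" if "I \<in> Omega s t W" for I
    using shuffle.positions_mu[OF shuffle_if_Omega[OF assms(3) that]] .
  have "bij_betw (mu s t W) (Omega s t W) (Lambda s t W)" if "t = 2"
  proof (rule bij_betw_byWitness[where f' = "\<lambda>\<pi>. positions \<pi> W"])
    have W_subset: "W \<subseteq> {1..s*t}"
      using assms(3) by auto
    show "\<forall>\<pi> \<in> Lambda s t W. mu s t W (positions \<pi> W) = \<pi>"
      using Lambda_positions(2)[OF _ W_subset] by blast
    show "(\<lambda>\<pi>. positions \<pi> W) ` Lambda s t W \<subseteq> Omega s t W"
      using positions_in_Omega assms(3) that by blast
  qed (use in_Lambda left_inverse in auto)
  then show ?thesis
    using in_Lambda inj_on_inverseI[of "Omega s t W" "\<lambda>\<pi>. positions \<pi> W"] left_inverse by blast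
qed

end
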